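(* Let $G=(V,E)$ be a $3$-uniform hypergraph. Consider the set of minimal canonical N-eigenvectors of the Laplacian tensor $\mathcal D-\mathcal A$ corresponding to the eigenvalue $0$, modulo the equivalence relation generated by $\mathbf x\sim e^{\theta\sqrt{-1}}\mathbf x$ ($\theta\in\mathbb R$) and $\mathbf x\sim\overline{\mathbf x}$ (complex conjugation); each equivalence class is a "minimal canonical conjugated N-eigenvector pair". Then the number of these classes equals the number of tripartite connected components of $G$ (counted with multiplicity as explained below).
   Context: A $3$-uniform hypergraph $G=(V,E)$ has vertex set $V=[n]$ ($n\ge3$) and nonempty edge set $E$ of $3$-element subsets; $E_i=\{e\in E:i\in e\}$, $d_i=|E_i|$. Connected components are maximal sets of vertices pairwise joined by chains of edges with consecutive edges intersecting; isolated vertices are also components. $\mathcal A$: $a_{i_1i_2i_3}=\frac12$ if $\{i_1,i_2,i_3\}\in E$, else $0$; $\mathcal D$ diagonal with $d_{iii}=d_i$; so $((\mathcal D-\mathcal A)\mathbf x^{2})_i=d_ix_i^{2}-\sum_{e\in E_i}\prod_{j\in e\setminus\{i\}}x_j$. A nonzero $\mathbf x\in\mathbb C^n$ is an eigenvector of $\mathcal T$ for $\lambda$ if $(\mathcal T\mathbf x^{2})_i=\lambda x_i^{2}$ for all $i$. It is an N-eigenvector if no nonzero complex multiple of $\mathbf x$ lies in $\mathbb R^n$; canonical if $\max_i|x_i|=1$; an eigenvector of eigenvalue $0$ is minimal if no eigenvector of eigenvalue $0$ has support strictly contained in its support. A tripartition of a vertex set $C$ (relative to the edges $e\subseteq C$)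 is an unordered partition $\{R,S,T\}$ of $C$ into three nonempty sets such that every edge $e\subseteq C$ either is contained in one of $R,S,T$ or meets each of $R,S,T$. A connected component $C$ of $G$ contributes to the count of tripartite connected components the number of its tripartitions (two tripartitions are the same only if they agree as unordered set partitions); the number of tripartite connected components of $G$ is the sum of these contributions over all connected components. *)

theory Defs
  imports Complex_Main "HOL-Library.Disjoint_Sets"
begin

text \<open>Vertices are the elements of a finite type 'a (playing the role of [n], n = CARD('a)).
  Edges E :: 'a set set. Vectors in C^n are functions 'a \<Rightarrow> complex.\<close>

definition edges_at :: "'a set set \<Rightarrow> 'a \<Rightarrow> 'a set set" where
  "edges_at E i = {e \<in> E. i \<in> e}"

definition degree :: "'a set set \<Rightarrow> 'a \<Rightarrow> nat" where
  "degree E i = card (edges_at E i)"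

definition lap_apply :: "'a set set \<Rightarrow> ('a \<Rightarrow> complex) \<Rightarrow> 'a \<Rightarrow> complex" where
  "lap_apply E x i = of_nat (degree E i) * (x i)^2
      - (\<Sum>e\<in>edges_at E i. \<Prod>j\<in>e - {i}. x j)"

definition lap_eigvec :: "'a set set \<Rightarrow> complex \<Rightarrow> ('a \<Rightarrow> complex) \<Rightarrow> bool" where
  "lap_eigvec E lam x \<longleftrightarrow> x \<noteq> (\<lambda>_. 0) \<and> (\<forall>i. lap_apply E x i = lam * (x i)^2)"

definition supp :: "('a \<Rightarrow> complex) \<Rightarrow> 'a set" where
  "supp x = {i. x i \<noteq> 0}"

definition N_vec :: "('a \<Rightarrow> complex) \<Rightarrow> bool" where
  "N_vec x \<longleftrightarrow> \<not> (\<exists>c::complex. c \<noteq> 0 \<and> (\<forall>i. c * x i \<in> \<real>))"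

definition canonical :: "('a::finite \<Rightarrow> complex) \<Rightarrow> bool" where
  "canonical x \<longleftrightarrow> Max (range (\<lambda>i. cmod (x i))) = 1"

definition minimal0 :: "'a set set \<Rightarrow> ('a \<Rightarrow> complex) \<Rightarrow> bool" where
  "minimal0 E x \<longleftrightarrow> lap_eigvec E 0 x \<and> \<not> (\<exists>y. lap_eigvec E 0 y \<and> supp y \<subset> supp x)"

definition MCN :: "'a::finite set set \<Rightarrow> ('a \<Rightarrow> complex) set" where
  "MCN E = {x. lap_eigvec E 0 x \<and> N_vec x \<and> canonical x \<and> minimal0 E x}"

definition gen_rel :: "'a::finite set set \<Rightarrow> (('a \<Rightarrow> complex) \<times> ('a \<Rightarrow> complex)) set" where
  "gen_rel E = {(x, y). x \<in> MCN E \<and> y \<in> MCN E \<and>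
      ((\<exists>\<theta>::real. y = (\<lambda>i. cis \<theta> * x i)) \<or> y = (\<lambda>i. cnj (x i)))}"

definition pair_rel :: "'a::finite set set \<Rightarrow> (('a \<Rightarrow> complex) \<times> ('a \<Rightarrow> complex)) set" where
  "pair_rel E = (gen_rel E \<union> (gen_rel E)\<inverse>)\<^sup>*"

text \<open>Connected components (isolated vertices included).\<close>
definition adj :: "'a set set \<Rightarrow> ('a \<times> 'a) set" where
  "adj E = {(i, j). \<exists>e\<in>E. i \<in> e \<and> j \<in> e}"

definition components :: "'a set set \<Rightarrow> 'a set set" where
  "components E = UNIV // ((adj E)\<^sup>*)"

definition tripartitions :: "'a set set \<Rightarrow> 'a set \<Rightarrow> 'a set set set" where
  "tripartitions E C = {P. partition_on C P \<and> card P = 3 \<and>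
      (\<forall>e\<in>E. e \<subseteq> C \<longrightarrow> (\<exists>B\<in>P. e \<subseteq> B) \<or> (\<forall>B\<in>P. e \<inter> B \<noteq> {}))}"

definition num_tripartite_components :: "'a set set \<Rightarrow> nat" where
  "num_tripartite_components E = (\<Sum>C\<in>components E. card (tripartitions E C))"

end

theory Submission
  imports Defs
begin

text \<open>At a vertex \<open>j\<close> where \<open>|x|\<close> is maximal, the eigenvalue-0 equation writes \<open>x\<^sub>j\<^sup>2\<close> as the average
  of the products \<open>x\<^sub>k x\<^sub>l\<close> over the edges \<open>{j,k,l}\<close> at \<open>j\<close>, each of modulus at most \<open>|x\<^sub>j|\<^sup>2\<close>; so all
  of them equal \<open>x\<^sub>j\<^sup>2\<close> and \<open>|x|\<close> stays maximal along edges. Hence a minimal eigenvector lives on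
  a single connected component \<open>C\<close>, has constant modulus there, and is balanced:
  \<open>x\<^sub>k x\<^sub>l = x\<^sub>j\<^sup>2\<close> on every edge. Balance makes \<open>x\<^sup>3\<close> constant on \<open>C\<close>, so \<open>x/x\<^sub>v\<close> takes values among the
  cube roots of unity, and every edge is monochromatic or rainbow. For an N-eigenvector all three
  values occur, and the level sets of \<open>x\<close> form a tripartition of \<open>C\<close>; conversely the values
  \<open>1, \<omega>, \<omega>\<^sup>2\<close> on the parts of a tripartition give a minimal canonical N-eigenvector. Two such
  eigenvectors with the same level sets differ by a relabelling of the cube roots fixing \<open>1\<close>, i.e.
  by a unimodular factor and possibly complex conjugation, which is the equivalence being counted.\<close>

section \<open>Cube roots of unity\<close>

definition \<omega> :: complex where "\<omega> = Complex (-1/2) (sqrt 3 / 2)"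

lemma omega_sq: "\<omega>^2 = Complex (-1/2) (- sqrt 3 / 2)"
  by (simp add: \<omega>_def Re_power2 Im_power2 complex_eq_iff power2_eq_square)

lemma omega_cube: "\<omega>^3 = 1"
proof -
  have "\<omega>^3 = \<omega> * \<omega>^2" by (simp add: power_def)
  thus ?thesis unfolding omega_sq by (simp add: \<omega>_def complex_eq_iff field_simps)
qed

lemma omega_neq_0: "\<omega> \<noteq> 0" by (simp add: \<omega>_def complex_eq_iff)

lemma omega_neq_1: "\<omega> \<noteq> 1" by (simp add: \<omega>_def complex_eq_iff)

lemma omega_sq_neq_1: "\<omega>^2 \<noteq> 1" unfolding omega_sq by (simp add: complex_eq_iff)

lemma omega_neq_omega_sq: "\<omega> \<noteq> \<omega>^2" unfolding omega_sq by (simp add: \<omega>_def complex_eq_iff)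

lemma cnj_omega: "cnj \<omega> = \<omega>^2" unfolding omega_sq by (simp add: \<omega>_def complex_eq_iff)

lemma cnj_omega_sq: "cnj (\<omega>^2) = \<omega>" unfolding omega_sq by (simp add: \<omega>_def complex_eq_iff)

lemma omega_not_real: "\<omega> \<notin> \<real>" by (simp add: \<omega>_def complex_is_Real_iff)

lemma norm_omega: "cmod \<omega> = 1" by (simp add: \<omega>_def cmod_def power2_eq_square)

lemma norm_omega_sq: "cmod (\<omega>^2) = 1" by (simp add: norm_omega norm_power)

lemma cube_eq_1_iff: "(z::complex)^3 = 1 \<longleftrightarrow> z = 1 \<or> z = \<omega> \<or> z = \<omega>^2"
proof -
  have sum: "1 + \<omega> + \<omega>^2 = 0" unfolding omega_sq by (simp add: \<omega>_def complex_eq_iff)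
  have "(z - 1) * (z - \<omega>) * (z - \<omega>^2)
        = z^3 - (1 + \<omega> + \<omega>^2) * z^2 + \<omega> * (1 + \<omega> + \<omega>^2) * z - \<omega>^3"
    by (simp add: algebra_simps power2_eq_square power3_eq_cube)
  hence "z^3 - 1 = (z - 1) * (z - \<omega>) * (z - \<omega>^2)" by (simp add: sum omega_cube)
  thus ?thesis by (metis eq_iff_diff_eq_0 mult_eq_0_iff)
qed

lemma cube_roots_cases:
  fixes p q r s :: complex
  assumes "p^3 = 1" "q^3 = 1" "r^3 = 1" "s^3 = 1" "p \<noteq> q" "p \<noteq> r" "q \<noteq> r"
  shows "s = p \<or> s = q \<or> s = r"
  using assms unfolding cube_eq_1_iff using omega_neq_1 omega_sq_neq_1 omega_neq_omega_sq by metis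

lemma distinct_cube_roots_mult:
  fixes p q r :: complex
  assumes "p^3 = 1" "q^3 = 1" "r^3 = 1" "p \<noteq> q" "p \<noteq> r" "q \<noteq> r"
  shows "q * r = p^2"
proof -
  have "\<omega> * \<omega>^2 = 1" "\<omega>^2 * \<omega> = 1" "(\<omega>^2)^2 = \<omega>"
    using omega_cube by (simp_all add: power2_eq_square power3_eq_cube mult.assoc)
  then show ?thesis using assms unfolding cube_eq_1_iff
    by (elim disjE) (simp_all add: power2_eq_square mult.assoc)
qed

text \<open>Here \<open>u' = \<sigma> \<circ> u\<close> for a permutation \<sigma> of the cube roots of unity fixing \<open>1\<close>, and the
  only such permutations are the identity and conjugation.\<close>
lemma cube_root_relabelling:
  fixes u u' :: "'a \<Rightarrow> complex"
  assumes roots: "\<And>i. i \<in> C \<Longrightarrow> u i ^ 3 = 1 \<and> u' i ^ 3 = 1"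
    and same_kernel: "\<And>i j. i \<in> C \<Longrightarrow> j \<in> C \<Longrightarrow> u i = u j \<longleftrightarrow> u' i = u' j"
    and "v \<in> C" "u v = 1" "u' v = 1"
  shows "(\<forall>i\<in>C. u' i = u i) \<or> (\<forall>i\<in>C. u' i = cnj (u i))"
proof (cases "\<forall>i\<in>C. u i = 1")
  case True
  then show ?thesis using same_kernel assms(3-5) by metis
next
  case False
  then obtain a where a: "a \<in> C" "u a \<noteq> 1" by blast
  have a': "u' a \<noteq> 1" using same_kernel[OF a(1) \<open>v \<in> C\<close>] assms(4,5) a(2) by simp
  have "(u' a = u a \<longrightarrow> u' i = u i) \<and> (u' a \<noteq> u a \<longrightarrow> u' i = cnj (u i))" if "i \<in> C" for i
    using roots[OF that] roots[OF a(1)] a(2) a'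
      same_kernel[OF that \<open>v \<in> C\<close>] same_kernel[OF that a(1)] assms(4,5)
    unfolding cube_eq_1_iff
    using omega_neq_1 omega_sq_neq_1 omega_neq_omega_sq cnj_omega cnj_omega_sq by auto
  then show ?thesis by blast
qed

lemma inj_on_if_three_values:
  assumes "card e = 3" "{p, q, r} \<subseteq> f ` e" "p \<noteq> q" "p \<noteq> r" "q \<noteq> r"
  shows "inj_on f e"
proof (rule eq_card_imp_inj_on)
  show fin: "finite e" using assms(1) by (metis card.infinite zero_neq_numeral)
  have "3 \<le> card (f ` e)" using card_mono[OF finite_imageI[OF fin] assms(2)] assms(3-5) by simp
  then show "card (f ` e) = card e" using card_image_le[OF fin, of f] assms(1) by simp
qed

lemma mult_eq_square_if_rainbow:
  fixes x :: "'a \<Rightarrow> complex"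
  assumes distinct: "i \<noteq> j" "i \<noteq> k" "j \<noteq> k" and rainbow: "{1, \<omega>, \<omega>^2} \<subseteq> x ` {i, j, k}"
    and roots: "\<And>l. l \<in> {i, j, k} \<Longrightarrow> x l ^ 3 = 1"
  shows "x j * x k = (x i)^2"
proof -
  have "inj_on x {i, j, k}"
    by (rule inj_on_if_three_values[OF _ rainbow])
      (use distinct omega_neq_1 omega_sq_neq_1 omega_neq_omega_sq in auto)
  then have "x i \<noteq> x j" "x i \<noteq> x k" "x j \<noteq> x k" using distinct by (auto dest: inj_onD)
  then show ?thesis by (intro distinct_cube_roots_mult) (simp_all add: roots)
qed

lemma cube_eq_if_balanced:
  fixes a b c :: complex
  assumes "b * c = a^2" "a * c = b^2"
  shows "a^3 = b^3"
proof -
  have "a^3 = a * (b * c)" using assms(1) by (simp add: power2_eq_square power3_eq_cube)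
  also have "\<dots> = b * (a * c)" by (simp add: algebra_simps)
  also have "\<dots> = b^3" using assms(2) by (simp add: power2_eq_square power3_eq_cube)
  finally show ?thesis .
qed

lemma eq_if_sum_eq_card_mult:
  fixes f :: "'b \<Rightarrow> complex"
  assumes fin: "finite A" and bound: "\<forall>a\<in>A. cmod (f a) \<le> cmod z"
    and sum: "(\<Sum>a\<in>A. f a) = of_nat (card A) * z" and "a \<in> A"
  shows "f a = z"
proof -
  have le: "Re (f b * cnj z) \<le> (cmod z)^2" if "b \<in> A" for b
  proof -
    have "Re (f b * cnj z) \<le> cmod (f b) * cmod z"
      using complex_Re_le_cmod[of "f b * cnj z"] by (simp add: norm_mult)
    also have "\<dots> \<le> (cmod z)^2" using bound that by (simp add: power2_eq_square mult_right_mono)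
    finally show ?thesis .
  qed
  have "(\<Sum>b\<in>A. Re (f b * cnj z)) = Re ((\<Sum>b\<in>A. f b) * cnj z)"
    by (simp add: sum_distrib_right)
  also have "\<dots> = (\<Sum>b\<in>A. (cmod z)^2)" by (simp add: sum mult.assoc flip: complex_norm_square)
  finally have sum_eq: "(\<Sum>b\<in>A. Re (f b * cnj z)) = (\<Sum>b\<in>A. (cmod z)^2)" .
  have "Re (f a * cnj z) = (cmod z)^2"
  proof (rule ccontr)
    assume "Re (f a * cnj z) \<noteq> (cmod z)^2"
    with le \<open>a \<in> A\<close> have "Re (f a * cnj z) < (cmod z)^2" by (simp add: order_less_le)
    with fin le \<open>a \<in> A\<close> have "(\<Sum>b\<in>A. Re (f b * cnj z)) < (\<Sum>b\<in>A. (cmod z)^2)"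
      by (intro sum_strict_mono_ex1) auto
    with sum_eq show False by simp
  qed
  moreover have "(cmod (f a))^2 \<le> (cmod z)^2" using bound \<open>a \<in> A\<close> by (simp add: power_mono)
  ultimately have "(Re (f a) - Re z)^2 + (Im (f a) - Im z)^2 \<le> 0"
    by (simp add: cmod_power2 power2_diff algebra_simps)
  then have "Re (f a) = Re z \<and> Im (f a) = Im z"
    by (metis add_nonneg_nonneg antisym eq_iff_diff_eq_0 sum_power2_eq_zero_iff zero_le_power2)
  then show ?thesis by (simp add: complex_eq_iff)
qed

lemma eq_if_mult_eq_square:
  fixes a b m :: real
  assumes "0 \<le> a" "0 \<le> b" "a \<le> m" "b \<le> m" "a * b = m * m"
  shows "a = m"
proof (rule ccontr)
  assume "a \<noteq> m"
  with assms have "a < m" "0 < m" by auto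
  have "a * b \<le> a * m" by (rule mult_left_mono[OF assms(4,1)])
  also have "\<dots> < m * m" using \<open>a < m\<close> \<open>0 < m\<close> by (simp add: mult_strict_right_mono)
  finally show False using assms(5) by simp
qed

lemma eq_scalar_multiple_if_ratios_eq:
  fixes x y :: "'a \<Rightarrow> complex"
  assumes "\<forall>i\<in>C. y i / y v = x i / x v" "x v \<noteq> 0" "y v \<noteq> 0"
    and "\<forall>i. i \<notin> C \<longrightarrow> x i = 0 \<and> y i = 0"
  shows "y = (\<lambda>i. y v / x v * x i)"
proof
  fix i show "y i = y v / x v * x i"
    using assms by (cases "i \<in> C") (auto simp: field_simps)
qed

lemma cis_Arg_unit:
  assumes "cmod c = 1" shows "cis (Arg c) = c"
proof -
  have "c \<noteq> 0" using assms by auto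
  then show ?thesis using assms by (simp add: cis_Arg sgn_eq)
qed

lemma inj_cnj: "inj cnj"
  by (rule injI) simp

lemma bij_betw_images_if_same_kernel:
  assumes "\<And>a b. a \<in> A \<Longrightarrow> b \<in> A \<Longrightarrow> f a = f b \<longleftrightarrow> g a = g b"
  shows "bij_betw (\<lambda>y. g (inv_into A f y)) (f ` A) (g ` A)"
proof -
  have g: "g (inv_into A f (f a)) = g a" if "a \<in> A" for a
    using assms[of "inv_into A f (f a)" a] that by (simp add: inv_into_into f_inv_into_f)
  have f: "f (inv_into A g (g a)) = f a" if "a \<in> A" for a
    using assms[of "inv_into A g (g a)" a] that by (simp add: inv_into_into f_inv_into_f)
  show ?thesis
    by (rule bij_betw_byWitness[where f' = "\<lambda>z. f (inv_into A g z)"]) (auto simp: f g)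
qed

section \<open>Connected components\<close>

definition component :: "'a set set \<Rightarrow> 'a \<Rightarrow> 'a set" where
  "component E v = (adj E)\<^sup>* `` {v}"

lemma sym_adj: "sym (adj E)"
  by (auto simp: sym_def adj_def)

lemma component_self: "v \<in> component E v"
  by (simp add: component_def)

lemma component_eq:
  assumes "w \<in> component E v" shows "component E w = component E v"
proof -
  have vw: "(v, w) \<in> (adj E)\<^sup>*" using assms by (simp add: component_def)
  then have "(w, v) \<in> (adj E)\<^sup>*" by (rule symD[OF sym_rtrancl[OF sym_adj]])
  with vw show ?thesis unfolding component_def by (auto intro: rtrancl_trans)
qed

lemma components_eq_range_component: "components E = range (component E)"
  by (auto simp: components_def component_def quotient_def)

lemma edge_subset_component:
  assumes "e \<in> E" "i \<in> e" "i \<in> component E v" shows "e \<subseteq> component E v"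
proof
  fix j assume "j \<in> e"
  with assms have "(i, j) \<in> adj E" by (auto simp: adj_def)
  with assms(3) show "j \<in> component E v"
    unfolding component_def by (auto intro: rtrancl_into_rtrancl)
qed

lemma component_induct [consumes 1, case_names base step]:
  assumes "j \<in> component E v" "P v"
    and "\<And>i j. i \<in> component E v \<Longrightarrow> (i, j) \<in> adj E \<Longrightarrow> P i \<Longrightarrow> P j"
  shows "P j"
proof -
  have "(v, j) \<in> (adj E)\<^sup>*" using assms(1) by (simp add: component_def)
  then show ?thesis
    by (induction rule: rtrancl_induct) (use assms(2,3) in \<open>auto simp: component_def\<close>)
qed

lemma prod_edge_minus:
  assumes "e = {i, j, k}" "i \<noteq> j" "i \<noteq> k" "j \<noteq> k"
  shows "(\<Prod>l\<in>e - {i}. x l) = x j * x k"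
proof -
  have "e - {i} = {j, k}" using assms by auto
  then show ?thesis using assms by simp
qed

section \<open>Eigenvectors, level sets and the pairing relation\<close>

definition max_modulus :: "('a::finite \<Rightarrow> complex) \<Rightarrow> real" where
  "max_modulus x = Max (range (\<lambda>i. cmod (x i)))"

lemma norm_le_max_modulus: "cmod (x i) \<le> max_modulus x"
  unfolding max_modulus_def by (rule Max_ge) auto

lemma max_modulus_attained: obtains v where "cmod (x v) = max_modulus x"
proof -
  have "max_modulus x \<in> range (\<lambda>i. cmod (x i))" unfolding max_modulus_def by (rule Max_in) auto
  then show ?thesis using that by auto
qed

definition balanced :: "'a set set \<Rightarrow> ('a \<Rightarrow> complex) \<Rightarrow> bool" where
  "balanced E x \<longleftrightarrow> (\<forall>e\<in>E. \<forall>i\<in>e. (\<Prod>j\<in>e - {i}. x j) = (x i)^2)"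

lemma lap_apply_balanced: "balanced E x \<Longrightarrow> lap_apply E x i = 0"
  by (simp add: balanced_def lap_apply_def degree_def edges_at_def)

lemma lap_eigvec_0_cnj_iff: "lap_eigvec E 0 (\<lambda>i. cnj (x i)) \<longleftrightarrow> lap_eigvec E 0 x"
proof -
  have "lap_apply E (\<lambda>i. cnj (x i)) i = cnj (lap_apply E x i)" for i
    by (simp add: lap_apply_def)
  then show ?thesis by (auto simp: lap_eigvec_def fun_eq_iff)
qed

lemma MCN_cnj:
  assumes "x \<in> MCN E" shows "(\<lambda>i. cnj (x i)) \<in> MCN E"
proof -
  have "N_vec (\<lambda>i. cnj (x i))"
    unfolding N_vec_def
  proof
    assume "\<exists>c. c \<noteq> 0 \<and> (\<forall>i. c * cnj (x i) \<in> \<real>)"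
    then obtain c where "c \<noteq> 0" and c: "\<forall>i. c * cnj (x i) \<in> \<real>" by blast
    moreover have "cnj c * x i \<in> \<real>" for i
    proof -
      have "c * cnj (x i) \<in> \<real>" using c by blast
      then show ?thesis using Reals_cnj_iff[of "c * cnj (x i)"] by simp
    qed
    ultimately have "cnj c \<noteq> 0" "\<forall>i. cnj c * x i \<in> \<real>" by auto
    then show False using assms by (auto simp: MCN_def N_vec_def)
  qed
  moreover have "supp (\<lambda>i. cnj (x i)) = supp x" by (simp add: supp_def)
  ultimately show ?thesis
    using assms by (simp add: MCN_def canonical_def minimal0_def lap_eigvec_0_cnj_iff)
qed

definition level_sets :: "('a \<Rightarrow> complex) \<Rightarrow> 'a set set" where
  "level_sets x = (\<lambda>i. {j. x j = x i}) ` supp x"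

lemma partition_on_level_sets: "partition_on (supp x) (level_sets x)"
  by (rule partition_onI) (auto simp: level_sets_def supp_def disjnt_def)

lemma level_sets_comp:
  assumes "inj f" "f 0 = 0"
  shows "level_sets (\<lambda>i. f (x i)) = level_sets x"
proof -
  have "f z = 0 \<longleftrightarrow> z = 0" for z using assms by (metis inj_eq)
  then have "supp (\<lambda>i. f (x i)) = supp x" by (simp add: supp_def)
  moreover have "(f (x j) = f (x i)) = (x j = x i)" for i j using assms(1) by (simp add: inj_eq)
  ultimately show ?thesis by (simp add: level_sets_def)
qed

lemma same_values_if_level_sets_eq:
  assumes "level_sets x = level_sets y" "i \<in> supp x"
  shows "x j = x i \<longleftrightarrow> y j = y i"
proof -
  have "{l. x l = x i} \<in> level_sets y" using assms by (auto simp: level_sets_def)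
  then obtain m where m: "{l. x l = x i} = {l. y l = y m}" by (auto simp: level_sets_def)
  then have "y i = y m" by blast
  with m show ?thesis by auto
qed

lemma level_sets_eq_if_pair_rel:
  assumes "(x, y) \<in> pair_rel E" shows "level_sets x = level_sets y"
  using assms unfolding pair_rel_def
proof (induction rule: rtrancl_induct)
  case (step y z)
  have gen: "level_sets a = level_sets b" if "(a, b) \<in> gen_rel E" for a b
  proof -
    from that consider t where "b = (\<lambda>i. cis t * a i)" | "b = (\<lambda>i. cnj (a i))"
      by (auto simp: gen_rel_def)
    then show ?thesis
    proof cases
      case 1
      then show ?thesis using level_sets_comp[of "\<lambda>z. cis t * z" a] by simp
    next
      case 2
      then show ?thesis using level_sets_comp[OF inj_cnj, of a] by simp
    qed
  qed
  have "level_sets y = level_sets z" using step.hyps(2) gen by (metis Un_iff converse_iff)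
  then show ?case using step.IH by simp
qed simp

lemma equiv_pair_rel: "equiv UNIV (pair_rel E)"
  unfolding pair_rel_def
  by (rule equivI) (simp_all add: refl_rtrancl sym_rtrancl[OF sym_Un_converse] trans_rtrancl)

lemma card_Union_tripartitions:
  "card (\<Union>C\<in>components (E :: 'a::finite set set). tripartitions E C) = num_tripartite_components E"
  unfolding num_tripartite_components_def
proof (rule card_UN_disjoint)
  show "\<forall>C\<in>components E. \<forall>C'\<in>components E. C \<noteq> C' \<longrightarrow>
      tripartitions E C \<inter> tripartitions E C' = {}"
    by (auto simp: tripartitions_def partition_on_def)
qed simp_all

lemma N_vec_if_values_1_omega:
  assumes "x r = 1" "x s = \<omega>"
  shows "N_vec x"
  unfolding N_vec_def
proof
  assume "\<exists>c. c \<noteq> 0 \<and> (\<forall>i. c * x i \<in> \<real>)"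
  then obtain c where "c \<noteq> 0" "c * x r \<in> \<real>" "c * x s \<in> \<real>" by blast
  then have "c * x s / (c * x r) \<in> \<real>" by (intro Reals_divide)
  with assms \<open>c \<noteq> 0\<close> show False using omega_not_real by simp
qed

lemma canonical_if_norm_le_1:
  assumes "\<And>i. cmod (x i) \<le> 1" "cmod (x r) = 1"
  shows "canonical x"
  unfolding canonical_def
proof (rule Max_eqI)
  show "1 \<in> range (\<lambda>i. cmod (x i))" using assms(2) by (metis rangeI)
qed (use assms(1) in auto)

definition tripartition_vector :: "'a set \<Rightarrow> 'a set \<Rightarrow> 'a set \<Rightarrow> 'a \<Rightarrow> complex" where
  "tripartition_vector R S T i =
     (if i \<in> R then 1 else if i \<in> S then \<omega> else if i \<in> T then \<omega>^2 else 0)"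

context
  fixes R S T :: "'a set"
  assumes disjoint: "R \<inter> S = {}" "S \<inter> T = {}" "R \<inter> T = {}"
begin

lemma tripartition_vector_eq_iff:
  shows "tripartition_vector R S T j = 1 \<longleftrightarrow> j \<in> R"
    and "tripartition_vector R S T j = \<omega> \<longleftrightarrow> j \<in> S"
    and "tripartition_vector R S T j = \<omega>^2 \<longleftrightarrow> j \<in> T"
    and "tripartition_vector R S T j = 0 \<longleftrightarrow> j \<notin> R \<union> S \<union> T"
  using disjoint omega_neq_0 omega_neq_1 omega_sq_neq_1 omega_neq_omega_sq
  by (auto simp: tripartition_vector_def disjoint_iff)

lemma supp_tripartition_vector: "supp (tripartition_vector R S T) = R \<union> S \<union> T"
  using tripartition_vector_eq_iff(4) by (auto simp: supp_def)

lemma level_sets_tripartition_vector: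
  assumes "R \<noteq> {}" "S \<noteq> {}" "T \<noteq> {}"
  shows "level_sets (tripartition_vector R S T) = {R, S, T}"
proof -
  let ?x = "tripartition_vector R S T"
  have fibre: "{j. ?x j = ?x i} = B" if "\<And>j. ?x j = c \<longleftrightarrow> j \<in> B" "i \<in> B" for c B i
  proof -
    have "?x i = c" using that by blast
    then have "{j. ?x j = ?x i} = {j. ?x j = c}" by (simp only:)
    then show ?thesis using that(1) by simp
  qed
  show ?thesis
    using assms fibre[OF tripartition_vector_eq_iff(1)] fibre[OF tripartition_vector_eq_iff(2)]
      fibre[OF tripartition_vector_eq_iff(3)]
    unfolding level_sets_def supp_tripartition_vector by blast
qed


lemma tripartition_vector_edge:
  assumes jk: "i \<noteq> j" "i \<noteq> k" "j \<noteq> k" and sub: "{i, j, k} \<subseteq> R \<union> S \<union> T"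
    and "{i, j, k} \<subseteq> R \<or> {i, j, k} \<subseteq> S \<or> {i, j, k} \<subseteq> T
      \<or> ({i, j, k} \<inter> R \<noteq> {} \<and> {i, j, k} \<inter> S \<noteq> {} \<and> {i, j, k} \<inter> T \<noteq> {})"
  shows "tripartition_vector R S T j * tripartition_vector R S T k = (tripartition_vector R S T i)^2"
  using assms(5)
proof (elim disjE conjE)
  let ?x = "tripartition_vector R S T"
  assume "{i, j, k} \<inter> R \<noteq> {}" "{i, j, k} \<inter> S \<noteq> {}" "{i, j, k} \<inter> T \<noteq> {}"
  then obtain a b c where "a \<in> {i, j, k}" "a \<in> R" "b \<in> {i, j, k}" "b \<in> S"
    "c \<in> {i, j, k}" "c \<in> T"
    by blast
  then have "?x a = 1" "?x b = \<omega>" "?x c = \<omega>^2" "a \<in> {i, j, k}" "b \<in> {i, j, k}" "c \<in> {i, j, k}"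
    using tripartition_vector_eq_iff(1-3) by blast+
  then have "{1, \<omega>, \<omega>^2} \<subseteq> ?x ` {i, j, k}" by (metis empty_subsetI image_eqI insert_subset)
  moreover have "?x l ^ 3 = 1" if "l \<in> {i, j, k}" for l
    using that sub omega_cube unfolding cube_eq_1_iff by (auto simp: tripartition_vector_def)
  ultimately show ?thesis by (rule mult_eq_square_if_rainbow[OF jk])
qed (use disjoint in \<open>auto simp: tripartition_vector_def power2_eq_square\<close>)
end

section \<open>Three-uniform hypergraphs\<close>

locale three_uniform =
  fixes E :: "'a::finite set set"
  assumes card_edge: "e \<in> E \<Longrightarrow> card e = 3"
begin

lemma edge_cases:
  assumes "e \<in> E" "i \<in> e"
  obtains j k where "e = {i, j, k}" "i \<noteq> j" "i \<noteq> k" "j \<noteq> k"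
proof -
  obtain a b c where e: "e = {a, b, c}" "a \<noteq> b" "b \<noteq> c" "a \<noteq> c"
    using card_edge[OF assms(1)] by (auto simp: card_3_iff)
  with assms(2) consider "i = a" | "i = b" | "i = c" by blast
  then show ?thesis
    by cases (use that e in \<open>auto simp: insert_commute\<close>)
qed

lemma prod_edge_minus_eq_0:
  assumes "e \<in> E" "i \<in> e" "\<forall>j\<in>e - {i}. x j = 0"
  shows "(\<Prod>j\<in>e - {i}. x j) = (0 :: 'b :: comm_semiring_1)"
proof -
  obtain j k where "e = {i, j, k}" "i \<noteq> j" "i \<noteq> k" "j \<noteq> k"
    using edge_cases assms(1,2) .
  then show ?thesis using assms(3) prod_edge_minus[of e i j k x] by simp
qed

lemma balanced_edge:
  assumes "balanced E x" "{i, j, k} \<in> E" "i \<noteq> j" "i \<noteq> k" "j \<noteq> k"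
  shows "x j * x k = (x i)^2"
proof -
  have "(\<Prod>l\<in>{i, j, k} - {i}. x l) = (x i)^2" using assms(1,2) unfolding balanced_def by blast
  then show ?thesis using prod_edge_minus[of "{i, j, k}" i j k x] assms(3-5) by simp
qed

lemma max_modulus_edge:
  assumes zero: "\<And>i. lap_apply E x i = 0" and max: "\<And>l. cmod (x l) \<le> cmod (x j)"
    and e: "e \<in> E" "j \<in> e"
  shows "(\<Prod>l\<in>e - {j}. x l) = (x j)^2" and "k \<in> e \<Longrightarrow> cmod (x k) = cmod (x j)"
proof -
  have bound: "\<forall>e'\<in>edges_at E j. cmod (\<Prod>l\<in>e' - {j}. x l) \<le> cmod ((x j)^2)"
  proof
    fix e' assume "e' \<in> edges_at E j"
    then have "e' \<in> E" "j \<in> e'" by (auto simp: edges_at_def)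
    then obtain a b where "e' = {j, a, b}" "j \<noteq> a" "j \<noteq> b" "a \<noteq> b"
      by (rule edge_cases)
    then have "cmod (\<Prod>l\<in>e' - {j}. x l) = cmod (x a) * cmod (x b)"
      by (simp add: prod_edge_minus norm_mult)
    also have "\<dots> \<le> cmod ((x j)^2)"
      using max by (simp add: norm_mult norm_power power2_eq_square mult_mono)
    finally show "cmod (\<Prod>l\<in>e' - {j}. x l) \<le> cmod ((x j)^2)" .
  qed
  have "(\<Sum>e'\<in>edges_at E j. \<Prod>l\<in>e' - {j}. x l) = of_nat (card (edges_at E j)) * (x j)^2"
    using zero[of j] by (simp add: lap_apply_def degree_def)
  from eq_if_sum_eq_card_mult[OF finite bound this]
  show prod: "(\<Prod>l\<in>e - {j}. x l) = (x j)^2" using e by (simp add: edges_at_def)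
  assume "k \<in> e"
  obtain a b where ab: "e = {j, a, b}" "j \<noteq> a" "j \<noteq> b" "a \<noteq> b"
    using edge_cases e .
  have ab_eq: "cmod (x a) * cmod (x b) = cmod (x j) * cmod (x j)"
    using prod prod_edge_minus[OF ab] by (metis norm_mult power2_eq_square)
  have "cmod (x a) = cmod (x j)"
    by (rule eq_if_mult_eq_square) (use ab_eq max in auto)
  moreover have "cmod (x b) = cmod (x j)"
    by (rule eq_if_mult_eq_square) (use ab_eq max in \<open>auto simp: mult.commute\<close>)
  ultimately show "cmod (x k) = cmod (x j)" using ab \<open>k \<in> e\<close> by auto
qed

lemma max_modulus_on_component:
  assumes zero: "\<And>i. lap_apply E x i = 0" and v: "cmod (x v) = max_modulus x"
    and "i \<in> component E v"
  shows "cmod (x i) = max_modulus x"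
  using assms(3)
proof (induction rule: component_induct)
  case base
  show ?case by (rule v)
next
  case (step i j)
  then obtain e where "e \<in> E" "i \<in> e" "j \<in> e" by (auto simp: adj_def)
  then show ?case
    using max_modulus_edge(2)[OF zero, of i] step norm_le_max_modulus by metis
qed

lemma zero_eigvec_supp_contains_component:
  assumes "lap_eigvec E 0 x"
  obtains v where "component E v \<subseteq> supp x" "\<forall>i\<in>component E v. cmod (x i) = max_modulus x"
proof -
  obtain v where v: "cmod (x v) = max_modulus x" by (rule max_modulus_attained)
  from assms obtain i where "x i \<noteq> 0" by (auto simp: lap_eigvec_def)
  then have "0 < max_modulus x"
    using norm_le_max_modulus[of x i] by (meson order_less_le_trans zero_less_norm_iff)
  then show ?thesis
    using that[of v] max_modulus_on_component[of x v] assms v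
    by (force simp: supp_def lap_eigvec_def)
qed

lemma lap_apply_restrict_component:
  "lap_apply E (\<lambda>i. if i \<in> component E v then x i else 0) i
     = (if i \<in> component E v then lap_apply E x i else 0)"
proof (cases "i \<in> component E v")
  case True
  then have "e \<subseteq> component E v" if "e \<in> edges_at E i" for e
    using that edge_subset_component[of e E i v] True by (auto simp: edges_at_def)
  then show ?thesis
    using True by (auto simp: lap_apply_def subset_iff intro!: sum.cong prod.cong)
next
  case False
  then have "e \<inter> component E v = {}" if "e \<in> edges_at E i" for e
    using that edge_subset_component by (fastforce simp: edges_at_def)
  then show ?thesis
    using False
    by (auto simp: lap_apply_def edges_at_def disjoint_iff card_edge
        intro!: sum.neutral prod_edge_minus_eq_0)
qed

lemma minimal0_supp_eq_component:
  assumes "minimal0 E x"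
  obtains v where "supp x = component E v" "\<forall>i\<in>component E v. cmod (x i) = max_modulus x"
proof -
  have ev: "lap_eigvec E 0 x" using assms by (simp add: minimal0_def)
  obtain v where sub: "component E v \<subseteq> supp x"
    and max: "\<forall>i\<in>component E v. cmod (x i) = max_modulus x"
    using zero_eigvec_supp_contains_component[OF ev] .
  define y where "y = (\<lambda>i. if i \<in> component E v then x i else 0)"
  have "y v \<noteq> 0" using sub component_self[of v E] by (auto simp: y_def supp_def)
  moreover have "lap_apply E y i = 0" for i
    using ev lap_apply_restrict_component[of v x i] by (simp add: y_def lap_eigvec_def)
  ultimately have "lap_eigvec E 0 y" by (auto simp: lap_eigvec_def)
  moreover have "supp y = component E v" using sub by (auto simp: y_def supp_def)
  ultimately have "\<not> component E v \<subset> supp x" using assms unfolding minimal0_def by blast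
  then have "supp x = component E v" using sub by blast
  with max show ?thesis using that by blast
qed

lemma balanced_if_max_modulus_on_supp:
  assumes zero: "\<And>i. lap_apply E x i = 0" and supp: "supp x = component E v"
    and max: "\<forall>i\<in>component E v. cmod (x i) = max_modulus x"
  shows "balanced E x"
  unfolding balanced_def
proof (intro ballI)
  fix e i assume e: "e \<in> E" "i \<in> e"
  show "(\<Prod>j\<in>e - {i}. x j) = (x i)^2"
  proof (cases "i \<in> component E v")
    case True
    then have "cmod (x l) \<le> cmod (x i)" for l using max norm_le_max_modulus by simp
    then show ?thesis by (rule max_modulus_edge(1)[OF zero _ e])
  next
    case False
    then have "\<forall>j\<in>e. x j = 0"
      using e edge_subset_component[of e E _ v] supp by (auto simp: supp_def)
    then have "(\<Prod>j\<in>e - {i}. x j) = 0" by (intro prod_edge_minus_eq_0[OF e]) blast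
    then show ?thesis using \<open>\<forall>j\<in>e. x j = 0\<close> e(2) by simp
  qed
qed

lemma minimal0_if_supp_component:
  assumes ev: "lap_eigvec E 0 x" and supp: "supp x = component E v"
  shows "minimal0 E x"
  unfolding minimal0_def
proof (intro conjI ev notI)
  assume "\<exists>y. lap_eigvec E 0 y \<and> supp y \<subset> supp x"
  then obtain y where y: "lap_eigvec E 0 y" "supp y \<subset> component E v" using supp by blast
  obtain w where w: "component E w \<subseteq> supp y"
    using zero_eigvec_supp_contains_component[OF y(1)] by blast
  then have "w \<in> component E v" using y(2) component_self[of w E] by blast
  then have "component E w = component E v" by (rule component_eq)
  with w y(2) show False by blast
qed

lemma MCN_balanced_on_component:
  assumes "x \<in> MCN E"
  obtains v where "supp x = component E v" "balanced E x" "\<forall>i\<in>component E v. cmod (x i) = 1"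
proof -
  have mn: "minimal0 E x" and one: "max_modulus x = 1"
    using assms by (auto simp: MCN_def canonical_def max_modulus_def)
  obtain v where supp: "supp x = component E v"
    and max: "\<forall>i\<in>component E v. cmod (x i) = max_modulus x"
    using minimal0_supp_eq_component[OF mn] .
  have "lap_apply E x i = 0" for i using mn by (simp add: minimal0_def lap_eigvec_def)
  then have "balanced E x" using supp max by (rule balanced_if_max_modulus_on_supp)
  with supp max one show ?thesis using that by simp
qed

end

section \<open>Balanced vectors supported on a component\<close>

locale component_vector = three_uniform +
  fixes x :: "'a::finite \<Rightarrow> complex" and v :: 'a
  assumes supp_eq_component: "supp x = component E v" and balanced: "balanced E x"
begin

lemma nonzero_on_component: "i \<in> component E v \<Longrightarrow> x i \<noteq> 0"
  using supp_eq_component by (auto simp: supp_def)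

lemma zero_off_component: "i \<notin> component E v \<Longrightarrow> x i = 0"
  using supp_eq_component by (auto simp: supp_def)

lemma balanced_edge_all:
  assumes "{i, j, k} \<in> E" "i \<noteq> j" "i \<noteq> k" "j \<noteq> k"
  shows "x j * x k = (x i)^2" "x i * x k = (x j)^2" "x i * x j = (x k)^2"
proof -
  show "x j * x k = (x i)^2" by (rule balanced_edge[OF balanced assms])
  show "x i * x k = (x j)^2"
    by (rule balanced_edge[OF balanced]) (use assms in \<open>auto simp: insert_commute\<close>)
  show "x i * x j = (x k)^2"
    by (rule balanced_edge[OF balanced]) (use assms in \<open>auto simp: insert_commute\<close>)
qed

lemma edge_monochromatic_or_rainbow:
  assumes e: "{i, j, k} \<in> E" "i \<noteq> j" "i \<noteq> k" "j \<noteq> k" and "i \<in> component E v"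
  shows "(x i = x j \<and> x j = x k) \<or> (x i \<noteq> x j \<and> x i \<noteq> x k \<and> x j \<noteq> x k)"
proof -
  have "{i, j, k} \<subseteq> component E v" by (rule edge_subset_component[OF e(1) _ assms(5)]) simp
  then have nz: "x i \<noteq> 0" "x j \<noteq> 0" "x k \<noteq> 0" using nonzero_on_component by auto
  note eqs = balanced_edge_all[OF e]
  have "x k = x i" if "x i = x j" using eqs(2) nz that by (simp add: power2_eq_square)
  moreover have "x j = x i" if "x i = x k" using eqs(3) nz that by (simp add: power2_eq_square)
  moreover have "x i = x k" if "x j = x k" using eqs(2) nz that by (simp add: power2_eq_square)
  ultimately show ?thesis by metis
qed

lemma cube_eq_on_component:
  assumes "i \<in> component E v" shows "(x i)^3 = (x v)^3"
  using assms
proof (induction rule: component_induct)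
  case (step i j)
  then obtain e where e: "e \<in> E" "i \<in> e" "j \<in> e" by (auto simp: adj_def)
  obtain a b where ab: "e = {i, a, b}" "i \<noteq> a" "i \<noteq> b" "a \<noteq> b"
    using e(1,2) by (rule edge_cases)
  note eqs = balanced_edge_all[of i a b, folded ab(1), OF e(1) ab(2-4)]
  have "(x a)^3 = (x i)^3" using cube_eq_if_balanced eqs(1,2) by blast
  moreover have "(x b)^3 = (x i)^3" using cube_eq_if_balanced eqs(1,3) by (metis mult.commute)
  ultimately show ?case using step.IH ab e(3) by auto
qed simp

lemma values_cube_roots: "i \<in> component E v \<Longrightarrow> (x i / x v)^3 = 1"
  using cube_eq_on_component nonzero_on_component[OF component_self] by (simp add: power_divide)

lemma values_on_component_cases:
  assumes "i \<in> component E v" "a \<in> component E v" "b \<in> component E v" "c \<in> component E v"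
    and "x a \<noteq> x b" "x a \<noteq> x c" "x b \<noteq> x c"
  shows "x i = x a \<or> x i = x b \<or> x i = x c"
proof -
  have nz: "x v \<noteq> 0" using nonzero_on_component[OF component_self] .
  have "x i / x v = x a / x v \<or> x i / x v = x b / x v \<or> x i / x v = x c / x v"
    by (rule cube_roots_cases) (use assms values_cube_roots nz in auto)
  then show ?thesis using nz by auto
qed

lemma three_values_if_N_vec:
  assumes "N_vec x"
  obtains a b c where "a \<in> component E v" "b \<in> component E v" "c \<in> component E v"
    "x a \<noteq> x b" "x a \<noteq> x c" "x b \<noteq> x c"
proof -
  have nz: "x v \<noteq> 0" using nonzero_on_component[OF component_self] .
  have "\<exists>a\<in>component E v. x a \<noteq> x v"
  proof (rule ccontr)
    assume "\<not> ?thesis"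
    then have "inverse (x v) * x i \<in> \<real>" for i
      using nz zero_off_component by (cases "i \<in> component E v") auto
    moreover have "inverse (x v) \<noteq> 0" using nz by simp
    ultimately show False using assms unfolding N_vec_def by blast
  qed
  then obtain a where a: "a \<in> component E v" "x a \<noteq> x v" by blast
  have "\<exists>i j. i \<in> component E v \<and> (i, j) \<in> adj E \<and> x i \<noteq> x j"
  proof (rule ccontr)
    assume "\<not> ?thesis"
    then have step: "x j = x i" if "i \<in> component E v" "(i, j) \<in> adj E" for i j
      using that by metis
    from a(1) have "x a = x v" by (induction rule: component_induct) (use step in auto)
    with a(2) show False ..
  qed
  then obtain i j where i: "i \<in> component E v" and ij: "(i, j) \<in> adj E" "x i \<noteq> x j"
    by blast
  then obtain e where e: "e \<in> E" "i \<in> e" "j \<in> e" by (auto simp: adj_def)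
  obtain p q where pq: "e = {i, p, q}" "i \<noteq> p" "i \<noteq> q" "p \<noteq> q"
    using e(1,2) by (rule edge_cases)
  have "j = p \<or> j = q" using e(3) pq(1) ij(2) by auto
  then have rainbow: "x i \<noteq> x p" "x i \<noteq> x q" "x p \<noteq> x q"
    using edge_monochromatic_or_rainbow[OF e(1)[unfolded pq(1)] pq(2-4) i] ij(2) by metis+
  have "p \<in> component E v" "q \<in> component E v"
    using edge_subset_component[OF e(1,2) i] pq(1) by auto
  then show ?thesis using that[OF i _ _ rainbow] by blast
qed

lemma edge_inside_or_across_level_sets:
  assumes e: "e \<in> E" "e \<subseteq> component E v"
  shows "(\<exists>B\<in>level_sets x. e \<subseteq> B) \<or> (\<forall>B\<in>level_sets x. e \<inter> B \<noteq> {})"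
proof -
  let ?C = "component E v" and ?L = "\<lambda>i. {j. x j = x i}"
  have L: "level_sets x = ?L ` ?C" using supp_eq_component by (simp add: level_sets_def)
  have "e \<noteq> {}" using card_edge[OF e(1)] by auto
  then obtain i where i: "i \<in> e" by blast
  obtain j k where jk: "e = {i, j, k}" "i \<noteq> j" "i \<noteq> k" "j \<noteq> k"
    using e(1) i by (rule edge_cases)
  have C: "i \<in> ?C" "j \<in> ?C" "k \<in> ?C" using e(2) jk(1) by auto
  from edge_monochromatic_or_rainbow[OF e(1)[unfolded jk(1)] jk(2-4) C(1)]
  consider "x i = x j" "x j = x k" | "x i \<noteq> x j" "x i \<noteq> x k" "x j \<noteq> x k"
    by blast
  then show ?thesis
  proof cases
    case 1
    then have "e \<subseteq> ?L i" using jk(1) by auto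
    moreover have "?L i \<in> level_sets x" using C(1) unfolding L by blast
    ultimately show ?thesis by blast
  next
    case 2
    have "e \<inter> ?L l \<noteq> {}" if "l \<in> ?C" for l
    proof -
      have "x l = x i \<or> x l = x j \<or> x l = x k"
        using values_on_component_cases[OF that C 2] .
      then have "i \<in> e \<inter> ?L l \<or> j \<in> e \<inter> ?L l \<or> k \<in> e \<inter> ?L l" using jk(1) by auto
      then show ?thesis by blast
    qed
    then show ?thesis unfolding L by blast
  qed
qed

lemma level_sets_tripartition:
  assumes "N_vec x"
  shows "level_sets x \<in> tripartitions E (component E v)"
proof -
  let ?C = "component E v" and ?L = "\<lambda>i. {j. x j = x i}"
  obtain a b c where abc: "a \<in> ?C" "b \<in> ?C" "c \<in> ?C" "x a \<noteq> x b" "x a \<noteq> x c" "x b \<noteq> x c"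
    using three_values_if_N_vec[OF assms] .
  have "?L i \<in> {?L a, ?L b, ?L c}" if "i \<in> ?C" for i
    using values_on_component_cases[OF that abc] by auto
  then have "level_sets x = {?L a, ?L b, ?L c}"
    using abc(1-3) supp_eq_component unfolding level_sets_def by blast
  moreover have "?L a \<noteq> ?L b" "?L a \<noteq> ?L c" "?L b \<noteq> ?L c"
    using abc(4-6) by (metis (mono_tags) mem_Collect_eq)+
  ultimately have "card (level_sets x) = 3" by simp
  then show ?thesis
    using partition_on_level_sets[of x] supp_eq_component edge_inside_or_across_level_sets
    by (simp add: tripartitions_def)
qed

end

section \<open>Tripartitions and classes of eigenvectors\<close>

context three_uniform
begin

lemma balanced_tripartition_vector:
  assumes C: "R \<union> S \<union> T = component E v"
    and disjoint: "R \<inter> S = {}" "S \<inter> T = {}" "R \<inter> T = {}"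
    and edges: "\<And>e. e \<in> E \<Longrightarrow> e \<subseteq> component E v \<Longrightarrow>
      e \<subseteq> R \<or> e \<subseteq> S \<or> e \<subseteq> T \<or> (e \<inter> R \<noteq> {} \<and> e \<inter> S \<noteq> {} \<and> e \<inter> T \<noteq> {})"
  shows "balanced E (tripartition_vector R S T)"
  unfolding balanced_def
proof (intro ballI)
  let ?x = "tripartition_vector R S T"
  fix e i assume e: "e \<in> E" "i \<in> e"
  show "(\<Prod>j\<in>e - {i}. ?x j) = (?x i)^2"
  proof (cases "i \<in> component E v")
    case False
    have "j \<notin> component E v" if "j \<in> e" for j
      using False edge_subset_component[OF e(1) that] e(2) by blast
    then have "\<forall>j\<in>e. ?x j = 0" using tripartition_vector_eq_iff(4)[OF disjoint] C by simp
    then have "(\<Prod>j\<in>e - {i}. ?x j) = 0" by (intro prod_edge_minus_eq_0[OF e]) blast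
    then show ?thesis using \<open>\<forall>j\<in>e. ?x j = 0\<close> e(2) by simp
  next
    case True
    have sub: "e \<subseteq> component E v" using edge_subset_component[OF e True] .
    obtain j k where jk: "e = {i, j, k}" "i \<noteq> j" "i \<noteq> k" "j \<noteq> k"
      using e by (rule edge_cases)
    have "?x j * ?x k = (?x i)^2"
      using tripartition_vector_edge[OF disjoint jk(2-4)] edges[OF e(1) sub] sub C jk(1) by simp
    then show ?thesis using prod_edge_minus[OF jk, of ?x] by simp
  qed
qed

lemma tripartition_realised_by_MCN:
  assumes P: "P \<in> tripartitions E (component E v)"
  shows "\<exists>x\<in>MCN E. level_sets x = P"
proof -
  have part: "partition_on (component E v) P" and "card P = 3"
    and edges: "\<forall>e\<in>E. e \<subseteq> component E v \<longrightarrow> (\<exists>B\<in>P. e \<subseteq> B) \<or> (\<forall>B\<in>P. e \<inter> B \<noteq> {})"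
    using P unfolding tripartitions_def by blast+
  obtain R S T where P3: "P = {R, S, T}" "R \<noteq> S" "S \<noteq> T" "R \<noteq> T"
    using \<open>card P = 3\<close> by (auto simp: card_3_iff)
  have C: "R \<union> S \<union> T = component E v" using partition_onD1[OF part] P3(1) by auto
  have ne: "R \<noteq> {}" "S \<noteq> {}" "T \<noteq> {}" using partition_onD3[OF part] P3(1) by auto
  have disjoint: "R \<inter> S = {}" "S \<inter> T = {}" "R \<inter> T = {}"
    using partition_onD2[OF part] P3 by (auto simp: disjoint_def)
  define x where "x = tripartition_vector R S T"
  note value_iff = tripartition_vector_eq_iff[OF disjoint, folded x_def]
  obtain r s where r: "r \<in> R" and s: "s \<in> S" using ne(1,2) by (meson ex_in_conv)
  have "balanced E x"
    unfolding x_def using C disjoint by (rule balanced_tripartition_vector) (use edges P3(1) in auto)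
  moreover have "x \<noteq> (\<lambda>_. 0)" using value_iff(1) r by (metis one_neq_zero)
  ultimately have ev: "lap_eigvec E 0 x" by (simp add: lap_eigvec_def lap_apply_balanced)
  have supp: "supp x = component E v"
    unfolding x_def supp_tripartition_vector[OF disjoint] C ..
  have "N_vec x" by (rule N_vec_if_values_1_omega) (use r s value_iff in auto)
  moreover have "canonical x"
    by (rule canonical_if_norm_le_1[of _ r])
       (use r value_iff norm_omega norm_omega_sq in \<open>auto simp: x_def tripartition_vector_def\<close>)
  moreover have "minimal0 E x" using ev supp by (rule minimal0_if_supp_component)
  moreover have "level_sets x = P"
    unfolding x_def P3(1) using disjoint ne by (rule level_sets_tripartition_vector)
  ultimately show ?thesis using ev by (auto simp: MCN_def)
qed

lemma cube_root_ratios_relabelled: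
  assumes "component_vector E x v" "component_vector E y v" and eq: "level_sets x = level_sets y"
  shows "(\<forall>i\<in>component E v. y i / y v = x i / x v)
    \<or> (\<forall>i\<in>component E v. y i / y v = cnj (x i / x v))"
proof -
  interpret X: component_vector E x v by fact
  interpret Y: component_vector E y v by fact
  have v: "v \<in> component E v" by (rule component_self)
  have nz: "x v \<noteq> 0" "y v \<noteq> 0" using X.nonzero_on_component Y.nonzero_on_component v by auto
  show ?thesis
  proof (rule cube_root_relabelling[OF _ _ v])
    show "(x i / x v) ^ 3 = 1 \<and> (y i / y v) ^ 3 = 1" if "i \<in> component E v" for i
      using X.values_cube_roots[OF that] Y.values_cube_roots[OF that] by simp
    show "x i / x v = x j / x v \<longleftrightarrow> y i / y v = y j / y v"
      if "i \<in> component E v" "j \<in> component E v" for i j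
      using same_values_if_level_sets_eq[OF eq, of j i] that X.supp_eq_component nz by auto
  qed (use nz in simp_all)
qed

lemma MCN_unit_multiple_if_level_sets_eq:
  assumes x: "x \<in> MCN E" and y: "y \<in> MCN E" and eq: "level_sets x = level_sets y"
  obtains c where "cmod c = 1" "y = (\<lambda>i. c * x i) \<or> y = (\<lambda>i. c * cnj (x i))"
proof -
  obtain v where xv: "supp x = component E v" "balanced E x"
    and x1: "\<forall>i\<in>component E v. cmod (x i) = 1"
    using MCN_balanced_on_component[OF x] .
  obtain w where yw: "supp y = component E w" "balanced E y"
    and y1: "\<forall>i\<in>component E w. cmod (y i) = 1"
    using MCN_balanced_on_component[OF y] .
  have "supp y = supp x"
    using partition_onD1[OF partition_on_level_sets[of x]] partition_onD1[OF partition_on_level_sets[of y]] eq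
    by simp
  then have yv: "supp y = component E v" using xv(1) by simp
  interpret X: component_vector E x v using xv by unfold_locales
  interpret Y: component_vector E y v using yv yw(2) by unfold_locales
  have v: "v \<in> component E v" by (rule component_self)
  have nz: "x v \<noteq> 0" "y v \<noteq> 0" using X.nonzero_on_component Y.nonzero_on_component v by auto
  have unit: "cmod (x v) = 1" "cmod (y v) = 1" using x1 y1 yv yw(1) v by auto
  have off: "\<forall>i. i \<notin> component E v \<longrightarrow> x i = 0 \<and> y i = 0"
    using X.zero_off_component Y.zero_off_component by blast
  from cube_root_ratios_relabelled[OF X.component_vector_axioms Y.component_vector_axioms eq]
  show ?thesis
  proof
    assume "\<forall>i\<in>component E v. y i / y v = x i / x v"
    then have "y = (\<lambda>i. y v / x v * x i)" using nz off by (rule eq_scalar_multiple_if_ratios_eq)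
    moreover have "cmod (y v / x v) = 1" using unit by (simp add: norm_divide)
    ultimately show ?thesis using that by blast
  next
    assume "\<forall>i\<in>component E v. y i / y v = cnj (x i / x v)"
    then have "\<forall>i\<in>component E v. y i / y v = cnj (x i) / cnj (x v)" by simp
    then have "y = (\<lambda>i. y v / cnj (x v) * cnj (x i))"
      using nz off by (intro eq_scalar_multiple_if_ratios_eq) simp_all
    moreover have "cmod (y v / cnj (x v)) = 1" using unit by (simp add: norm_divide)
    ultimately show ?thesis using that by blast
  qed
qed

lemma pair_rel_if_level_sets_eq:
  assumes x: "x \<in> MCN E" and y: "y \<in> MCN E" and eq: "level_sets x = level_sets y"
  shows "(x, y) \<in> pair_rel E"
proof -
  have gen: "(a, b) \<in> pair_rel E" if "(a, b) \<in> gen_rel E" for a b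
    using that by (auto simp: pair_rel_def)
  obtain c where c: "cmod c = 1" "y = (\<lambda>i. c * x i) \<or> y = (\<lambda>i. c * cnj (x i))"
    using MCN_unit_multiple_if_level_sets_eq[OF assms] .
  from c(2) show ?thesis
  proof
    assume "y = (\<lambda>i. c * x i)"
    then have "y = (\<lambda>i. cis (Arg c) * x i)" using cis_Arg_unit[OF c(1)] by simp
    then show ?thesis using gen x y by (auto simp: gen_rel_def)
  next
    assume y_cnj: "y = (\<lambda>i. c * cnj (x i))"
    define z where "z = (\<lambda>i. cnj (x i))"
    have z: "z \<in> MCN E" unfolding z_def by (rule MCN_cnj[OF x])
    have "(x, z) \<in> pair_rel E" using gen x z by (auto simp: gen_rel_def z_def)
    moreover have "y = (\<lambda>i. cis (Arg c) * z i)"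
      using y_cnj cis_Arg_unit[OF c(1)] by (simp add: z_def)
    then have "(z, y) \<in> pair_rel E" using gen y z by (auto simp: gen_rel_def)
    ultimately show ?thesis unfolding pair_rel_def by (rule rtrancl_trans)
  qed
qed

lemma pair_rel_class_eq_iff:
  assumes "x \<in> MCN E" "y \<in> MCN E"
  shows "pair_rel E `` {x} = pair_rel E `` {y} \<longleftrightarrow> level_sets x = level_sets y"
  using eq_equiv_class_iff[OF equiv_pair_rel] level_sets_eq_if_pair_rel
    pair_rel_if_level_sets_eq[OF assms] by blast

lemma level_sets_image_MCN:
  "level_sets ` MCN E = (\<Union>C\<in>components E. tripartitions E C)"
proof
  show "level_sets ` MCN E \<subseteq> (\<Union>C\<in>components E. tripartitions E C)"
  proof
    fix P assume "P \<in> level_sets ` MCN E"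
    then obtain x where x: "x \<in> MCN E" "P = level_sets x" by blast
    obtain v where "supp x = component E v" "balanced E x" using MCN_balanced_on_component[OF x(1)] by blast
    then interpret component_vector E x v by unfold_locales
    have "level_sets x \<in> tripartitions E (component E v)"
      using x(1) by (intro level_sets_tripartition) (simp add: MCN_def)
    then show "P \<in> (\<Union>C\<in>components E. tripartitions E C)"
      using x(2) by (auto simp: components_eq_range_component)
  qed
  show "(\<Union>C\<in>components E. tripartitions E C) \<subseteq> level_sets ` MCN E"
    using tripartition_realised_by_MCN by (force simp: components_eq_range_component)
qed

end

theorem proposition6p1:
  fixes E :: "'a::finite set set"
  assumes "card (UNIV :: 'a set) \<ge> 3"
    and "E \<noteq> {}"
    and "\<forall>e\<in>E. card e = 3"
  shows "finite (MCN E // pair_rel E) \<and>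
         card (MCN E // pair_rel E) = num_tripartite_components E"
proof -
  interpret three_uniform E using assms(3) by unfold_locales blast
  let ?class = "\<lambda>x. pair_rel E `` {x}"
  have classes: "MCN E // pair_rel E = ?class ` MCN E" by (auto simp: quotient_def)
  have "bij_betw (\<lambda>y. level_sets (inv_into (MCN E) ?class y)) (?class ` MCN E) (level_sets ` MCN E)"
    by (rule bij_betw_images_if_same_kernel) (rule pair_rel_class_eq_iff)
  then have "finite (MCN E // pair_rel E)" "card (MCN E // pair_rel E) = card (level_sets ` MCN E)"
    unfolding classes by (auto simp: bij_betw_finite bij_betw_same_card)
  then show ?thesis by (simp add: level_sets_image_MCN card_Union_tripartitions)
qed

end
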